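(* Let $(A,B)$ be a regular pair with $A,B\in\mathbb{C}^{n\times n}$, and let $C,D\in\mathbb{C}^{n\times n}$ be such that $[C,D]\in\mathbb{C}^{n\times2n}$ has full row rank and $CA+DB=0$. Then the pair $(D,C)$ is regular.
   Context: A pair $(A,B)$ of square matrices is regular if $\det(A-\lambda B)\neq0$ for some $\lambda\in\mathbb{C}$. *)

theory Defs
  imports "HOL-Analysis.Analysis"
begin

definition regular_pair :: "complex^'n^'n \<Rightarrow> complex^'n^'n \<Rightarrow> bool" where
  "regular_pair A B \<longleftrightarrow> (\<exists>z::complex. det (A - (\<chi> i j. z * B $ i $ j)) \<noteq> 0)"

definition hcat :: "'a^'m^'r \<Rightarrow> 'a^'n^'r \<Rightarrow> 'a^('m + 'n)^'r" where
  "hcat C D = (\<chi> i j. case j of Inl k \<Rightarrow> C $ i $ k | Inr k \<Rightarrow> D $ i $ k)"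

end

theory Submission imports Defs begin

text \<open>If \<open>y (D + w C) = 0\<close>, then \<open>u = y C\<close> satisfies \<open>y D = -w u\<close>, hence
  \<open>u A = y C A = - y D B = w u B\<close>, i.e. \<open>u\<close> is a left null vector of \<open>A - w B\<close>. Choosing \<open>w\<close> with
  \<open>det (A - w B) \<noteq> 0\<close> forces \<open>y C = 0\<close> and then \<open>y D = 0\<close>, so \<open>y [C, D] = 0\<close>, and full row rank
  of \<open>[C, D]\<close> gives \<open>y = 0\<close>. Thus \<open>D - (-w) C\<close> is nonsingular.\<close>

definition pencil :: "'a::field^'n^'m \<Rightarrow> 'a^'n^'m \<Rightarrow> 'a \<Rightarrow> 'a^'n^'m" where
  "pencil A B z = A - (\<chi> i j. z * B $ i $ j)"

lemma regular_pair_iff_pencil: "regular_pair A B \<longleftrightarrow> (\<exists>z. det (pencil A B z) \<noteq> 0)"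
  by (simp add: regular_pair_def pencil_def)

lemma vector_matrix_mult_pencil: "y v* pencil A B z = y v* A - z *s (y v* B)"
  by (simp add: pencil_def vec_eq_iff vector_matrix_mult_def sum_distrib_left sum_subtractf
      algebra_simps)

lemma vector_matrix_mult_eq_sum_rows: "y v* (M::'a::field^'c^'r) = (\<Sum>i\<in>UNIV. y $ i *s row i M)"
  by (simp add: vec_eq_iff vector_matrix_mult_def row_def sum_component mult.commute)

lemma vector_matrix_mult_hcat_eq_0: "y v* hcat C D = 0 \<longleftrightarrow> y v* C = 0 \<and> y v* D = 0"
proof -
  have "(y v* hcat C D) $ j = (case j of Inl k \<Rightarrow> (y v* C) $ k | Inr k \<Rightarrow> (y v* D) $ k)" for j
    by (cases j) (simp_all add: vector_matrix_mult_def hcat_def)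
  then show ?thesis
    by (auto simp: vec_eq_iff split: sum.split)
qed

lemma full_row_rank_rows_independent:
  fixes M :: "'a::field^'c^'r"
  assumes "rank M = CARD('r)"
  shows "vec.independent (rows M)" and "inj (\<lambda>i. row i M)"
proof -
  have rows: "rows M = range (\<lambda>i. row i M)"
    by (auto simp: rows_def)
  have "vec.dim (rows M) \<le> card (rows M)"
    using rows by (intro vec.dim_le_card) (auto intro: vec.span_base)
  moreover have "card (rows M) \<le> CARD('r)"
    using rows by (simp add: card_image_le)
  ultimately have card_rows: "card (rows M) = CARD('r)" "vec.dim (rows M) = CARD('r)"
    using assms by (simp_all add: row_rank_def_gen)
  then show "vec.independent (rows M)"
    using vec.card_eq_dim[of "rows M" "rows M"] rows by (auto intro: vec.span_base)
  show "inj (\<lambda>i. row i M)"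
    using card_rows rows by (simp add: inj_on_iff_eq_card[symmetric])
qed

lemma full_row_rank_left_kernel:
  fixes M :: "'a::field^'c^'r"
  assumes "rank M = CARD('r)" and "y v* M = 0"
  shows "y = 0"
proof -
  note indep = full_row_rank_rows_independent[OF assms(1)]
  define c where "c v = y $ inv (\<lambda>i. row i M) v" for v
  have "(\<Sum>v\<in>rows M. c v *s v) = (\<Sum>i\<in>UNIV. c (row i M) *s row i M)"
    by (simp add: rows_def full_SetCompr_eq sum.reindex[OF indep(2)])
  also have "\<dots> = y v* M"
    by (simp add: c_def inv_f_f[OF indep(2)] vector_matrix_mult_eq_sum_rows)
  finally have "\<forall>v\<in>rows M. c v = 0"
    using assms(2) indep(1) vec.independent_explicit by auto
  then have "c (row i M) = 0" for i
    by (auto simp: rows_def)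
  then have "y $ i = 0" for i
    by (simp add: c_def inv_f_f[OF indep(2)])
  then show ?thesis
    by (simp add: vec_eq_iff)
qed

lemma det_eq_0_left_kernel:
  fixes M :: "'a::field^'n^'n"
  shows "det M = 0 \<longleftrightarrow> (\<exists>y. y \<noteq> 0 \<and> y v* M = 0)"
proof -
  have "det M = 0 \<longleftrightarrow> \<not> (\<exists>B. B ** transpose M = mat 1)"
    by (simp add: invertible_det_nz det_transpose flip: invertible_left_inverse)
  also have "\<dots> \<longleftrightarrow> (\<exists>y. y \<noteq> 0 \<and> y v* M = 0)"
    unfolding matrix_left_invertible_ker by auto
  finally show ?thesis .
qed

lemma left_kernel_pencil_swap:
  fixes A B C D :: "'a::field^'n^'n"
  assumes nonsingular: "det (pencil A B w) \<noteq> 0"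
    and full_rank: "rank (hcat C D) = CARD('n)"
    and annihilate: "C ** A + D ** B = 0"
    and y: "y v* pencil D C (- w) = 0"
  shows "y = 0"
proof -
  define u where "u = y v* C"
  have yD: "y v* D = (- w) *s u"
    using y by (simp add: vector_matrix_mult_pencil u_def eq_neg_iff_add_eq_0)
  have "u v* pencil A B w = y v* (C ** A) - w *s (u v* B)"
    by (simp add: vector_matrix_mult_pencil u_def vector_matrix_mul_assoc)
  also have "\<dots> = - ((y v* D) v* B) - w *s (u v* B)"
  proof -
    have "C ** A = 0 - D ** B"
      using annihilate by (simp add: eq_neg_iff_add_eq_0)
    then show ?thesis
      by (simp only: vector_matrix_mult_diff_rdistrib vector_matrix_mul_assoc) simp
  qed
  also have "\<dots> = 0"
    by (simp only: yD scalar_vector_matrix_assoc) (simp add: vec_eq_iff)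
  finally have "u = 0"
    using nonsingular det_eq_0_left_kernel by blast
  then have "y v* hcat C D = 0"
    using yD by (simp add: vector_matrix_mult_hcat_eq_0 u_def)
  then show ?thesis
    using full_row_rank_left_kernel[OF full_rank] by blast
qed

theorem lemma3p4:
  fixes A B C D :: "complex^'n^'n"
  assumes "regular_pair A B"
    and "rank (hcat C D) = CARD('n)"
    and "C ** A + D ** B = 0"
  shows "regular_pair D C"
proof -
  obtain w where "det (pencil A B w) \<noteq> 0"
    using assms(1) by (auto simp: regular_pair_iff_pencil)
  then have "det (pencil D C (- w)) \<noteq> 0"
    using left_kernel_pencil_swap[OF _ assms(2,3)] det_eq_0_left_kernel by blast
  then show ?thesis
    by (auto simp: regular_pair_iff_pencil)
qed

end
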